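(* Let $\pi_n^\rho(\cdot\mid F_n)$ be an M-posterior whose loss $\rho$ is bounded from below and whose score $\psi$ is bounded on $\mathcal X\times\Theta$. Let $\pi$ be a bounded (possibly improper) prior density on $\Theta$, and assume one of: (a) $\int_\Theta|\theta|\pi(\theta)d\theta<\infty$ and $\sup_{\theta\in\Theta}\pi(\theta)|\theta|<\infty$; or (b) for each $x$, $\theta\mapsto\rho(x,\theta)$ is convex and coercive, i.e. $\rho(x,\theta)\to\infty$ as $|\theta|\to\infty$. Then $\pi_n^\rho(\cdot\mid F_n)$ is uniformly B-robust.
   Context: Sample space $\mathcal X\subseteq\mathbb R^d$, parameter space $\Theta\subseteq\mathbb R$ an interval containing $0$, loss $\rho:\mathcal X\times\Theta\to\mathbb R$ differentiable in $\theta$ with score $\psi(x,\theta)=\partial_\theta\rho(x,\theta)$, prior density $\pi\ge0$ on $\Theta$ (possibly improper). For a distribution $G$ on $\mathcal X$, the M-posterior is $\pi_n^\rho(\theta\mid G)=\pi(\theta)\exp(-n\mathbb E_G[\rho(X,\theta)])/\int_\Theta\pi(\theta')\exp(-n\mathbb E_G[\rho(X,\theta')])d\theta'$ whenever the denominator is finite and positive. $F_n$ is the empirical distribution of a fixed sample $x_1,\dots,x_n\in\mathcal X$. For $x_0\in\mathcal X$, $\epsilon\in[0,1]$, $F_{n,\epsilon,x_0}=(1-\epsilon)F_n+\epsilon\delta_{x_0}$. Posterior influence function: $\mathrm{PIF}(x_0;\theta,\rho,F_n)=\frac{d}{d\epsilon}\pi_n^\rho(\theta\mid F_{n,\epsilon,x_0})\big|_{\epsilon=0}$.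 The M-posterior is uniformly B-robust if $\sup_{\theta\in\Theta}\sup_{x_0\in\mathcal X}|\mathrm{PIF}(x_0;\theta,\rho,F_n)|<\infty$. *)

theory Defs
  imports "HOL-Analysis.Analysis"
begin

definition emp_risk :: "('a \<Rightarrow> real \<Rightarrow> real) \<Rightarrow> nat \<Rightarrow> (nat \<Rightarrow> 'a) \<Rightarrow> real \<Rightarrow> real" where
  "emp_risk \<rho> n xs \<theta> = (\<Sum>i<n. \<rho> (xs i) \<theta>) / real n"

text \<open>Expected loss under the contaminated distribution (1-eps) F_n + eps delta_x0.\<close>
definition cont_risk :: "('a \<Rightarrow> real \<Rightarrow> real) \<Rightarrow> nat \<Rightarrow> (nat \<Rightarrow> 'a) \<Rightarrow> 'a \<Rightarrow> real \<Rightarrow> real \<Rightarrow> real" where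
  "cont_risk \<rho> n xs x0 \<epsilon> \<theta> = (1 - \<epsilon>) * emp_risk \<rho> n xs \<theta> + \<epsilon> * \<rho> x0 \<theta>"

definition mpost_kernel :: "real set \<Rightarrow> (real \<Rightarrow> real) \<Rightarrow> ('a \<Rightarrow> real \<Rightarrow> real) \<Rightarrow> nat \<Rightarrow> (nat \<Rightarrow> 'a) \<Rightarrow> 'a \<Rightarrow> real \<Rightarrow> real \<Rightarrow> real" where
  "mpost_kernel \<Theta> \<pi> \<rho> n xs x0 \<epsilon> \<theta> = \<pi> \<theta> * exp (- real n * cont_risk \<rho> n xs x0 \<epsilon> \<theta>)"

text \<open>M-posterior density pi_n^rho(theta | F_{n,eps,x0}) (normalised over Theta w.r.t. Lebesgue measure).\<close>
definition mpost :: "real set \<Rightarrow> (real \<Rightarrow> real) \<Rightarrow> ('a \<Rightarrow> real \<Rightarrow> real) \<Rightarrow> nat \<Rightarrow> (nat \<Rightarrow> 'a) \<Rightarrow> 'a \<Rightarrow> real \<Rightarrow> real \<Rightarrow> real" where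
  "mpost \<Theta> \<pi> \<rho> n xs x0 \<epsilon> \<theta> =
     mpost_kernel \<Theta> \<pi> \<rho> n xs x0 \<epsilon> \<theta> / (LINT t:\<Theta>|lborel. mpost_kernel \<Theta> \<pi> \<rho> n xs x0 \<epsilon> t)"

text \<open>Uniform B-robustness: the posterior influence function (derivative in eps at eps = 0,
  eps ranging over [0,1]) exists for all theta in Theta and x0 in X and is uniformly bounded.\<close>
definition unif_B_robust :: "'a set \<Rightarrow> real set \<Rightarrow> (real \<Rightarrow> real) \<Rightarrow> ('a \<Rightarrow> real \<Rightarrow> real) \<Rightarrow> nat \<Rightarrow> (nat \<Rightarrow> 'a) \<Rightarrow> bool" where
  "unif_B_robust X \<Theta> \<pi> \<rho> n xs \<longleftrightarrow>
     (\<exists>B. \<forall>\<theta>\<in>\<Theta>. \<forall>x0\<in>X. \<exists>D.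
        ((\<lambda>\<epsilon>. mpost \<Theta> \<pi> \<rho> n xs x0 \<epsilon> \<theta>) has_real_derivative D) (at 0 within {0..1}) \<and> \<bar>D\<bar> \<le> B)"

end

theory Submission
  imports Defs "HOL-Probability.Sinc_Integral"
begin

(* Write d(t) = rho(x0,t) - E(t) for the gap between the contaminating and the empirical loss,
   so that the contaminated kernel is the uncontaminated kernel k(t) times exp(-n eps d(t)).
   Differentiating the normalised posterior at eps = 0 gives
     PIF(x0; theta) = n k(theta) (INT (d(t) - d(theta)) k(t) dt) / Z^2,   Z = INT k.
   A bounded score makes d Lipschitz with constant 2M, so |d(t) - d(theta)| <= 2M (|t| + |theta|)
   and the PIF is bounded uniformly in theta and x0 as soon as INT |t| k(t) dt < oo and
   sup k(theta) |theta| < oo. Under (a) both come from the prior; under (b) convexity turns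
   coercivity into linear growth of the loss, so k decays exponentially. The derivative may be
   taken under the integral by dominated convergence, with a dominating function built from
   pi exp(-n E / 2), since the loss is bounded below. *)

lemma abs_exp_minus_one_le: "\<bar>exp u - 1\<bar> \<le> \<bar>u\<bar> * (1 + exp u)" for u :: real
proof (cases "0 \<le> u")
  case True
  have "1 - u \<le> exp (- u)" using exp_ge_add_one_self[of "- u"] by simp
  then have "(1 - u) * exp u \<le> 1" by (simp add: exp_minus field_simps)
  then show ?thesis using True by (simp add: algebra_simps)
next
  case False
  have "1 + u \<le> exp u" by (rule exp_ge_add_one_self)
  moreover have "u * exp u \<le> 0" using False by (simp add: mult_nonpos_nonneg)
  moreover have "\<bar>exp u - 1\<bar> = 1 - exp u" using False by simp
  moreover have "\<bar>u\<bar> * (1 + exp u) = - u - u * exp u" using False by (simp add: algebra_simps)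
  ultimately show ?thesis by linarith
qed

lemma integrable_one_plus_abs_mult_exp_neg_abs:
  fixes c :: real
  assumes c: "0 < c"
  shows "integrable lborel (\<lambda>x. (1 + \<bar>x\<bar>) * exp (- c * \<bar>x\<bar>))"
proof -
  define h where "h x = (1 + x) * exp (- x) * indicator {0..} x" for x :: real
  have h_nonneg: "0 \<le> h x" for x by (simp add: h_def indicator_def)
  have "integrable lborel (\<lambda>x::real. x ^ 0 * exp (- x) * indicator {0..} x + x ^ 1 * exp (- x) * indicator {0..} x)"
    by (intro Bochner_Integration.integrable_add integrable.intros[OF has_bochner_integral_I0i_power_exp_m'])
  then have "integrable lborel h" by (simp add: h_def[abs_def] algebra_simps)
  then have "integrable lborel (\<lambda>x. h (0 + c * x) + h (0 + (- c) * x))"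
    using lborel_integrable_real_affine_iff[of c h 0] lborel_integrable_real_affine_iff[of "- c" h 0] c
    by simp
  then have int: "integrable lborel (\<lambda>x. max 1 (1 / c) * (h (c * x) + h (- c * x)))" by simp
  show ?thesis
  proof (rule Bochner_Integration.integrable_bound[OF int])
    show "AE x in lborel. norm ((1 + \<bar>x\<bar>) * exp (- c * \<bar>x\<bar>)) \<le> norm (max 1 (1 / c) * (h (c * x) + h (- c * x)))"
    proof (rule AE_I2)
      fix x :: real
      have "1 + \<bar>x\<bar> \<le> max 1 (1 / c) * (1 + c * \<bar>x\<bar>)"
        using c mult_right_mono[of 1 c "\<bar>x\<bar>"] by (auto simp: max_def field_simps)
      then have "(1 + \<bar>x\<bar>) * exp (- c * \<bar>x\<bar>) \<le> max 1 (1 / c) * h (c * \<bar>x\<bar>)"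
        using c by (simp add: h_def mult_right_mono)
      also have "\<dots> \<le> max 1 (1 / c) * (h (c * x) + h (- c * x))"
        using h_nonneg[of "c * x"] h_nonneg[of "- c * x"] by (cases "0 \<le> x") (auto intro: mult_left_mono)
      finally show "norm ((1 + \<bar>x\<bar>) * exp (- c * \<bar>x\<bar>)) \<le> norm (max 1 (1 / c) * (h (c * x) + h (- c * x)))"
        by simp
    qed
  qed simp
qed

lemma has_real_derivative_integral_at_right:
  fixes F :: "real \<Rightarrow> 'a \<Rightarrow> real" and F' w :: "'a \<Rightarrow> real"
  assumes \<delta>: "0 < \<delta>"
    and [measurable]: "\<And>e. F e \<in> borel_measurable M" "F' \<in> borel_measurable M"
    and int0: "integrable M (F 0)" and intw: "integrable M w"
    and lim: "AE x in M. ((\<lambda>e. (F e x - F 0 x) / e) \<longlongrightarrow> F' x) (at_right 0)"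
    and bound: "\<And>e. 0 < e \<Longrightarrow> e \<le> \<delta> \<Longrightarrow> AE x in M. \<bar>F e x - F 0 x\<bar> \<le> e * w x"
  shows "((\<lambda>e. integral\<^sup>L M (F e)) has_real_derivative integral\<^sup>L M F') (at_right 0)"
proof -
  have small: "\<forall>\<^sub>F t in at_top. 0 < inverse t \<and> inverse t \<le> \<delta>"
    unfolding eventually_at_top_linorder
  proof (intro exI allI impI)
    fix t assume t: "1 / \<delta> \<le> t"
    moreover have "0 < 1 / \<delta>" using \<delta> by simp
    ultimately have "0 < t" by linarith
    then show "0 < inverse t \<and> inverse t \<le> \<delta>"
      using t \<delta> by (simp add: field_simps)
  qed
  have intF: "integrable M (F e)" if "0 < e" "e \<le> \<delta>" for e
  proof (rule Bochner_Integration.integrable_bound)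
    show "integrable M (\<lambda>x. \<bar>F 0 x\<bar> + e * w x)" using int0 intw by auto
    show "AE x in M. norm (F e x) \<le> norm (\<bar>F 0 x\<bar> + e * w x)"
      using bound[OF that] by eventually_elim (smt (verit) real_norm_def)
  qed simp
  \<comment> \<open>dominated convergence is stated along \<open>at_top\<close>, hence the substitution \<open>e = 1 / t\<close>\<close>
  define s where "s t x = (F (inverse t) x - F 0 x) * t" for t x
  have "((\<lambda>t. integral\<^sup>L M (s t)) \<longlongrightarrow> integral\<^sup>L M F') at_top"
  proof (rule integral_dominated_convergence_at_top[where w=w])
    show "AE x in M. ((\<lambda>t. s t x) \<longlongrightarrow> F' x) at_top"
      using lim by eventually_elim (simp add: s_def filterlim_at_right_to_top divide_inverse)
    show "\<forall>\<^sub>F t in at_top. AE x in M. norm (s t x) \<le> w x"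
      using small
    proof eventually_elim
      case (elim t)
      then have t: "0 < t" by simp
      from elim have "AE x in M. \<bar>F (inverse t) x - F 0 x\<bar> \<le> inverse t * w x"
        by (intro bound) auto
      then show ?case
      proof eventually_elim
        case (elim x)
        then have "\<bar>F (inverse t) x - F 0 x\<bar> * t \<le> inverse t * w x * t"
          using t by (intro mult_right_mono) auto
        moreover have "inverse t * w x * t = w x" using t by simp
        ultimately show ?case using t by (simp add: s_def abs_mult)
      qed
    qed
    show "s t \<in> borel_measurable M" for t unfolding s_def by measurable
  qed (simp_all add: intw)
  moreover have "\<forall>\<^sub>F t in at_top. integral\<^sup>L M (s t) =
      (integral\<^sup>L M (F (inverse t)) - integral\<^sup>L M (F 0)) / inverse t"
    using small
  proof eventually_elim
    case (elim t)
    then have "integrable M (F (inverse t))" by (intro intF) auto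
    then show ?case using int0 by (simp add: s_def[abs_def] divide_inverse)
  qed
  ultimately have "((\<lambda>t. (integral\<^sup>L M (F (inverse t)) - integral\<^sup>L M (F 0)) / inverse t)
      \<longlongrightarrow> integral\<^sup>L M F') at_top"
    by (rule Lim_transform_eventually)
  then show ?thesis
    by (simp add: has_field_derivative_iff filterlim_at_right_to_top)
qed

lemma set_borel_measurable_mult_continuous:
  fixes f g :: "real \<Rightarrow> real"
  assumes "f \<in> borel_measurable lborel" "S \<in> sets borel" "continuous_on S g"
  shows "set_borel_measurable lborel S (\<lambda>t. f t * g t)"
proof -
  have "(\<lambda>t. indicator S t *\<^sub>R g t) \<in> borel_measurable lborel"
    using set_measurable_continuous_on[OF assms(2,3)] by (simp add: set_borel_measurable_def)
  with assms(1) have "(\<lambda>t. f t * (indicator S t *\<^sub>R g t)) \<in> borel_measurable lborel"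
    by (rule borel_measurable_times)
  then show ?thesis by (simp add: set_borel_measurable_def mult.left_commute)
qed

lemma convex_on_coercive_ge_linear:
  fixes f :: "real \<Rightarrow> real"
  assumes S: "convex S" "0 \<in> S" and cvx: "convex_on S f"
    and lower: "\<And>t. t \<in> S \<Longrightarrow> L \<le> f t"
    and coercive: "\<forall>K. \<exists>R. \<forall>t\<in>S. R \<le> \<bar>t\<bar> \<longrightarrow> K \<le> f t"
  obtains R C where "0 < R" "\<And>t. t \<in> S \<Longrightarrow> \<bar>t\<bar> / R - C \<le> f t"
proof -
  obtain R0 where R0: "\<And>t. t \<in> S \<Longrightarrow> R0 \<le> \<bar>t\<bar> \<Longrightarrow> f 0 + 1 \<le> f t"
    using coercive by blast
  define R where "R = max R0 1"
  have "0 < R" by (simp add: R_def)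
  moreover have "\<bar>t\<bar> / R - max (- f 0) (1 - L) \<le> f t" if t: "t \<in> S" for t
  proof (cases "R \<le> \<bar>t\<bar>")
    case True
    define l where "l = R / \<bar>t\<bar>"
    have l: "0 < l" "l \<le> 1" "\<bar>l * t\<bar> = R"
      using True \<open>0 < R\<close> by (auto simp: l_def field_simps abs_mult)
    \<comment> \<open>the chord from 0 to \<open>l * t\<close> rises by at least 1; convexity keeps \<open>f\<close> above its extension\<close>
    have "l * t \<in> S" using convexD[OF S(1) S(2) t, of "1 - l" l] l by simp
    then have "f 0 + 1 \<le> f (l * t)" using R0 l by (simp add: R_def)
    also have "\<dots> \<le> (1 - l) * f 0 + l * f t"
      using convex_onD[OF cvx, of l 0 t] l S(2) t by simp
    finally have "1 / l \<le> f t - f 0" using l by (simp add: field_simps)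
    moreover have "1 / l = \<bar>t\<bar> / R" using True \<open>0 < R\<close> by (simp add: l_def)
    ultimately show ?thesis by linarith
  next
    case False
    then have "\<bar>t\<bar> / R < 1" using \<open>0 < R\<close> by simp
    then show ?thesis using lower[OF t] by linarith
  qed
  ultimately show ?thesis by (rule that)
qed

locale bounded_score_mposterior =
  fixes X :: "'a set" and \<Theta> :: "real set" and \<rho> \<psi> :: "'a \<Rightarrow> real \<Rightarrow> real"
    and \<pi> :: "real \<Rightarrow> real" and n :: nat and xs :: "nat \<Rightarrow> 'a" and L M P :: real
  assumes Theta_interval: "is_interval \<Theta>" and zero_in: "0 \<in> \<Theta>"
    and score: "\<And>x \<theta>. x \<in> X \<Longrightarrow> \<theta> \<in> \<Theta> \<Longrightarrow> (\<rho> x has_real_derivative \<psi> x \<theta>) (at \<theta> within \<Theta>)"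
    and n_pos: "1 \<le> n" and sample: "\<And>i. i < n \<Longrightarrow> xs i \<in> X"
    and prior_meas: "\<pi> \<in> borel_measurable lborel"
    and prior_nonneg: "\<And>\<theta>. \<theta> \<in> \<Theta> \<Longrightarrow> 0 \<le> \<pi> \<theta>"
    and loss_ge: "\<And>x \<theta>. x \<in> X \<Longrightarrow> \<theta> \<in> \<Theta> \<Longrightarrow> L \<le> \<rho> x \<theta>"
    and score_le: "\<And>x \<theta>. x \<in> X \<Longrightarrow> \<theta> \<in> \<Theta> \<Longrightarrow> \<bar>\<psi> x \<theta>\<bar> \<le> M"
    and prior_le: "\<And>\<theta>. \<theta> \<in> \<Theta> \<Longrightarrow> \<pi> \<theta> \<le> P"
    and post_int: "set_integrable lborel \<Theta> (mpost_kernel \<Theta> \<pi> \<rho> n xs (xs 0) 0)"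
    and post_pos: "0 < (LINT t:\<Theta>|lborel. mpost_kernel \<Theta> \<pi> \<rho> n xs (xs 0) 0 t)"
begin

abbreviation risk :: "real \<Rightarrow> real" where "risk \<equiv> emp_risk \<rho> n xs"

text \<open>In the notation of the header, \<open>base_kernel\<close> is \<open>k\<close>, \<open>base_mass\<close> is \<open>Z\<close> and
  \<open>loss_gap x0\<close> is \<open>d\<close>.\<close>

definition base_kernel :: "real \<Rightarrow> real" where
  "base_kernel t = \<pi> t * exp (- real n * risk t)"

definition base_mass :: real where
  "base_mass = (LINT t:\<Theta>|lborel. base_kernel t)"

definition loss_gap :: "'a \<Rightarrow> real \<Rightarrow> real" where
  "loss_gap x0 t = \<rho> x0 t - risk t"

text \<open>Halving the exponent leaves room for contamination: as the loss is bounded below, every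
  contaminated kernel with \<open>\<epsilon> \<le> 1/2\<close> lies below a constant multiple of the envelope.\<close>

definition envelope :: "real \<Rightarrow> real" where
  "envelope t = \<pi> t * exp (- (real n / 2) * risk t)"

lemma Theta_borel: "\<Theta> \<in> sets borel"
  using Theta_interval by (rule real_interval_borel_measurable)

lemma sample_0: "xs 0 \<in> X"
  using sample n_pos by simp

lemma score_bound_nonneg: "0 \<le> M"
  using score_le[OF sample_0 zero_in] by linarith

lemma prior_bound_nonneg: "0 \<le> P"
  using prior_le[OF zero_in] prior_nonneg[OF zero_in] by linarith

lemma mpost_kernel_eq:
  "mpost_kernel \<Theta> \<pi> \<rho> n xs x0 e t = base_kernel t * exp (- (real n * loss_gap x0 t) * e)"
proof -
  have exponent: "- real n * cont_risk \<rho> n xs x0 e t = - real n * risk t + - (real n * loss_gap x0 t) * e"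
    by (simp add: cont_risk_def loss_gap_def algebra_simps)
  show ?thesis
    unfolding mpost_kernel_def base_kernel_def exponent exp_add by (simp only: mult.assoc)
qed

lemma mpost_kernel_0: "mpost_kernel \<Theta> \<pi> \<rho> n xs x0 0 = base_kernel"
  by (simp add: mpost_kernel_eq fun_eq_iff)

lemma set_integrable_base_kernel: "set_integrable lborel \<Theta> base_kernel"
  using post_int by (simp add: mpost_kernel_0)

lemma base_mass_pos: "0 < base_mass"
  using post_pos by (simp add: base_mass_def mpost_kernel_0)

lemma base_kernel_nonneg: "t \<in> \<Theta> \<Longrightarrow> 0 \<le> base_kernel t"
  by (simp add: base_kernel_def prior_nonneg)

lemma envelope_nonneg: "t \<in> \<Theta> \<Longrightarrow> 0 \<le> envelope t"
  by (simp add: envelope_def prior_nonneg)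

lemma n_mult_risk: "real n * risk t = (\<Sum>i<n. \<rho> (xs i) t)"
  using n_pos by (simp add: emp_risk_def)

lemma risk_ge: "t \<in> \<Theta> \<Longrightarrow> L \<le> risk t"
proof -
  assume t: "t \<in> \<Theta>"
  have "real (card {..<n}) * L \<le> (\<Sum>i<n. \<rho> (xs i) t)"
    by (rule sum_bounded_below) (simp add: loss_ge sample t)
  then have "real n * L \<le> real n * risk t" by (simp add: n_mult_risk)
  then show ?thesis using n_pos by simp
qed

lemma base_kernel_le:
  assumes t: "t \<in> \<Theta>"
  shows "base_kernel t \<le> P * exp (- real n * L)"
proof -
  have "exp (- real n * risk t) \<le> exp (- real n * L)"
    using mult_left_mono[OF risk_ge[OF t], of "real n"] by simp
  then show ?thesis
    unfolding base_kernel_def by (intro mult_mono) (auto simp: prior_le prior_nonneg t prior_bound_nonneg)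
qed

lemma envelope_le:
  assumes t: "t \<in> \<Theta>"
  shows "envelope t \<le> exp (- real n * L / 2) * \<pi> t"
proof -
  have "exp (- (real n / 2) * risk t) \<le> exp (- real n * L / 2)"
    using mult_left_mono[OF risk_ge[OF t], of "real n / 2"] by simp
  then show ?thesis
    unfolding envelope_def using prior_nonneg[OF t] by (simp add: mult_left_mono mult.commute)
qed

lemma mpost_kernel_le_envelope:
  assumes x0: "x0 \<in> X" and e: "0 \<le> e" "e \<le> 1 / 2" and t: "t \<in> \<Theta>"
  shows "mpost_kernel \<Theta> \<pi> \<rho> n xs x0 e t \<le> exp (- real n * L / 2) * envelope t"
proof -
  have "0 \<le> (1 / 2 - e) * (risk t - L) + e * (\<rho> x0 t - L)"
    using e risk_ge[OF t] loss_ge[OF x0 t] by simp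
  then have "L / 2 + risk t / 2 \<le> cont_risk \<rho> n xs x0 e t"
    by (simp add: cont_risk_def algebra_simps)
  then have "real n * (L / 2 + risk t / 2) \<le> real n * cont_risk \<rho> n xs x0 e t"
    by (rule mult_left_mono) simp
  then have "- real n * cont_risk \<rho> n xs x0 e t \<le> - real n * L / 2 + - (real n / 2) * risk t"
    by (simp add: algebra_simps)
  then have "exp (- real n * cont_risk \<rho> n xs x0 e t) \<le> exp (- real n * L / 2) * exp (- (real n / 2) * risk t)"
    by (simp flip: exp_add)
  then show ?thesis
    using prior_nonneg[OF t] by (simp add: mpost_kernel_def envelope_def mult_left_mono mult.left_commute)
qed

lemma base_kernel_le_envelope: "t \<in> \<Theta> \<Longrightarrow> base_kernel t \<le> exp (- real n * L / 2) * envelope t"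
  using mpost_kernel_le_envelope[OF sample_0, of 0 t] by (simp add: mpost_kernel_0)

lemma loss_lipschitz:
  assumes "x \<in> X" "s \<in> \<Theta>" "t \<in> \<Theta>"
  shows "\<bar>\<rho> x s - \<rho> x t\<bar> \<le> M * \<bar>s - t\<bar>"
  using field_differentiable_bound[of \<Theta> "\<rho> x" "\<psi> x" M s t] assms score score_le
    Theta_interval is_interval_convex_1 by auto

lemma risk_lipschitz:
  assumes "s \<in> \<Theta>" "t \<in> \<Theta>"
  shows "\<bar>risk s - risk t\<bar> \<le> M * \<bar>s - t\<bar>"
proof -
  have "real n * \<bar>risk s - risk t\<bar> = \<bar>real n * risk s - real n * risk t\<bar>"
    by (simp add: abs_mult flip: right_diff_distrib)
  also have "\<dots> = \<bar>\<Sum>i<n. \<rho> (xs i) s - \<rho> (xs i) t\<bar>"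
    by (simp add: n_mult_risk sum_subtractf)
  also have "\<dots> \<le> (\<Sum>i<n. \<bar>\<rho> (xs i) s - \<rho> (xs i) t\<bar>)"
    by (rule sum_abs)
  also have "\<dots> \<le> (\<Sum>i<n. M * \<bar>s - t\<bar>)"
    by (intro sum_mono loss_lipschitz sample assms) simp
  finally show ?thesis using n_pos by simp
qed

lemma loss_gap_lipschitz:
  assumes "x0 \<in> X" "s \<in> \<Theta>" "t \<in> \<Theta>"
  shows "\<bar>loss_gap x0 s - loss_gap x0 t\<bar> \<le> 2 * M * \<bar>s - t\<bar>"
  using loss_lipschitz[OF assms] risk_lipschitz[OF assms(2,3)] unfolding loss_gap_def by linarith

lemma continuous_on_loss: "x \<in> X \<Longrightarrow> continuous_on \<Theta> (\<rho> x)"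
  using DERIV_continuous_on score by blast

lemma continuous_on_risk: "continuous_on \<Theta> risk"
proof -
  have "continuous_on \<Theta> (\<lambda>t. (\<Sum>i<n. \<rho> (xs i) t) / real n)"
    by (intro continuous_intros continuous_on_loss sample) (use n_pos in auto)
  then show ?thesis by (simp add: emp_risk_def[abs_def])
qed

lemma set_integrable_envelope_dominated:
  assumes env: "set_integrable lborel \<Theta> (\<lambda>t. (1 + \<bar>t\<bar>) * envelope t)"
    and meas: "set_borel_measurable lborel \<Theta> f"
    and bound: "\<And>t. t \<in> \<Theta> \<Longrightarrow> \<bar>f t\<bar> \<le> C * ((1 + \<bar>t\<bar>) * envelope t)"
  shows "set_integrable lborel \<Theta> f"
proof (rule set_integrable_bound[OF _ meas])
  show "set_integrable lborel \<Theta> (\<lambda>t. C * ((1 + \<bar>t\<bar>) * envelope t))"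
    using env by simp
  show "AE t in lborel. t \<in> \<Theta> \<longrightarrow> norm (f t) \<le> norm (C * ((1 + \<bar>t\<bar>) * envelope t))"
    using bound by (intro AE_I2 impI) (auto intro: order_trans[OF _ abs_ge_self])
qed

lemma abs_loss_gap_le:
  assumes x0: "x0 \<in> X" and t: "t \<in> \<Theta>"
  shows "\<bar>loss_gap x0 t\<bar> \<le> (\<bar>loss_gap x0 0\<bar> + 2 * M) * (1 + \<bar>t\<bar>)"
proof -
  have "\<bar>loss_gap x0 t\<bar> \<le> \<bar>loss_gap x0 0\<bar> + 2 * M * \<bar>t\<bar>"
    using loss_gap_lipschitz[OF x0 t zero_in] by simp
  moreover have "0 \<le> \<bar>loss_gap x0 0\<bar> * \<bar>t\<bar> + 2 * M" using score_bound_nonneg by simp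
  ultimately show ?thesis by (simp add: algebra_simps)
qed

lemma set_borel_measurable_envelope_moment:
  "set_borel_measurable lborel \<Theta> (\<lambda>t. (1 + \<bar>t\<bar>) * envelope t)"
proof -
  have "continuous_on \<Theta> (\<lambda>t. (1 + \<bar>t\<bar>) * exp (- (real n / 2) * risk t))"
    by (intro continuous_intros continuous_on_risk)
  from set_borel_measurable_mult_continuous[OF prior_meas Theta_borel this]
  show ?thesis by (simp add: envelope_def mult_ac)
qed

lemma set_integrable_abs_mult_base_kernel:
  assumes env: "set_integrable lborel \<Theta> (\<lambda>t. (1 + \<bar>t\<bar>) * envelope t)"
  shows "set_integrable lborel \<Theta> (\<lambda>t. \<bar>t\<bar> * base_kernel t)"
proof (rule set_integrable_envelope_dominated[OF env])
  have "continuous_on \<Theta> (\<lambda>t. \<bar>t\<bar> * exp (- real n * risk t))"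
    by (intro continuous_intros continuous_on_risk)
  from set_borel_measurable_mult_continuous[OF prior_meas Theta_borel this]
  show "set_borel_measurable lborel \<Theta> (\<lambda>t. \<bar>t\<bar> * base_kernel t)"
    by (simp add: base_kernel_def mult_ac)
  fix t assume t: "t \<in> \<Theta>"
  have "\<bar>t\<bar> * base_kernel t \<le> (1 + \<bar>t\<bar>) * (exp (- real n * L / 2) * envelope t)"
    using base_kernel_le_envelope[OF t] base_kernel_nonneg[OF t] by (intro mult_mono) auto
  then show "\<bar>\<bar>t\<bar> * base_kernel t\<bar> \<le> exp (- real n * L / 2) * ((1 + \<bar>t\<bar>) * envelope t)"
    using base_kernel_nonneg[OF t] by (simp add: abs_mult mult_ac)
qed

lemma set_integrable_loss_gap_mult_base_kernel:
  assumes x0: "x0 \<in> X" and env: "set_integrable lborel \<Theta> (\<lambda>t. (1 + \<bar>t\<bar>) * envelope t)"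
  shows "set_integrable lborel \<Theta> (\<lambda>t. loss_gap x0 t * base_kernel t)"
proof (rule set_integrable_envelope_dominated[OF env])
  have "continuous_on \<Theta> (\<lambda>t. loss_gap x0 t * exp (- real n * risk t))"
    unfolding loss_gap_def by (intro continuous_intros continuous_on_risk continuous_on_loss x0)
  from set_borel_measurable_mult_continuous[OF prior_meas Theta_borel this]
  show "set_borel_measurable lborel \<Theta> (\<lambda>t. loss_gap x0 t * base_kernel t)"
    by (simp add: base_kernel_def mult_ac)
  fix t assume t: "t \<in> \<Theta>"
  have "\<bar>loss_gap x0 t * base_kernel t\<bar> = \<bar>loss_gap x0 t\<bar> * base_kernel t"
    using base_kernel_nonneg[OF t] by (simp add: abs_mult)
  also have "\<dots> \<le> ((\<bar>loss_gap x0 0\<bar> + 2 * M) * (1 + \<bar>t\<bar>)) * (exp (- real n * L / 2) * envelope t)"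
    using abs_loss_gap_le[OF x0 t] base_kernel_le_envelope[OF t] base_kernel_nonneg[OF t]
    by (intro mult_mono) auto
  also have "\<dots> = exp (- real n * L / 2) * (\<bar>loss_gap x0 0\<bar> + 2 * M) * ((1 + \<bar>t\<bar>) * envelope t)"
    by (simp add: mult_ac)
  finally show "\<bar>loss_gap x0 t * base_kernel t\<bar>
      \<le> exp (- real n * L / 2) * (\<bar>loss_gap x0 0\<bar> + 2 * M) * ((1 + \<bar>t\<bar>) * envelope t)" .
qed

lemma has_real_derivative_mpost_kernel:
  "((\<lambda>e. mpost_kernel \<Theta> \<pi> \<rho> n xs x0 e t) has_real_derivative
     - real n * (loss_gap x0 t * base_kernel t)) (at 0)"
  unfolding mpost_kernel_eq by (auto intro!: derivative_eq_intros)

lemma mpost_kernel_increment_le: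
  assumes x0: "x0 \<in> X" and e: "0 < e" "e \<le> 1 / 2" and t: "t \<in> \<Theta>"
  shows "\<bar>mpost_kernel \<Theta> \<pi> \<rho> n xs x0 e t - base_kernel t\<bar>
    \<le> e * (2 * exp (- real n * L / 2) * real n * (\<bar>loss_gap x0 0\<bar> + 2 * M) * ((1 + \<bar>t\<bar>) * envelope t))"
proof -
  define u where "u = - (real n * loss_gap x0 t) * e"
  have "mpost_kernel \<Theta> \<pi> \<rho> n xs x0 e t - base_kernel t = base_kernel t * (exp u - 1)"
    by (simp add: mpost_kernel_eq u_def algebra_simps)
  then have "\<bar>mpost_kernel \<Theta> \<pi> \<rho> n xs x0 e t - base_kernel t\<bar> = base_kernel t * \<bar>exp u - 1\<bar>"
    using base_kernel_nonneg[OF t] by (simp add: abs_mult)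
  also have "\<dots> \<le> base_kernel t * (\<bar>u\<bar> * (1 + exp u))"
    by (intro mult_left_mono abs_exp_minus_one_le base_kernel_nonneg t)
  also have "\<dots> = e * real n * \<bar>loss_gap x0 t\<bar> * (base_kernel t + mpost_kernel \<Theta> \<pi> \<rho> n xs x0 e t)"
    using e by (simp add: u_def mpost_kernel_eq abs_mult algebra_simps)
  also have "\<dots> \<le> e * real n * ((\<bar>loss_gap x0 0\<bar> + 2 * M) * (1 + \<bar>t\<bar>)) * (2 * exp (- real n * L / 2) * envelope t)"
  proof (intro mult_mono mult_left_mono)
    show "base_kernel t + mpost_kernel \<Theta> \<pi> \<rho> n xs x0 e t \<le> 2 * exp (- real n * L / 2) * envelope t"
      using base_kernel_le_envelope[OF t] mpost_kernel_le_envelope[OF x0 _ e(2) t] e by simp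
    show "0 \<le> base_kernel t + mpost_kernel \<Theta> \<pi> \<rho> n xs x0 e t"
      using base_kernel_nonneg[OF t] by (simp add: mpost_kernel_eq)
  qed (use abs_loss_gap_le[OF x0 t] e score_bound_nonneg in auto)
  also have "\<dots> = e * (2 * exp (- real n * L / 2) * real n * (\<bar>loss_gap x0 0\<bar> + 2 * M) * ((1 + \<bar>t\<bar>) * envelope t))"
    by (simp add: algebra_simps)
  finally show ?thesis .
qed

lemma set_borel_measurable_mpost_kernel:
  assumes x0: "x0 \<in> X"
  shows "set_borel_measurable lborel \<Theta> (mpost_kernel \<Theta> \<pi> \<rho> n xs x0 e)"
proof -
  have "continuous_on \<Theta> (\<lambda>t. exp (- real n * cont_risk \<rho> n xs x0 e t))"
    unfolding cont_risk_def by (intro continuous_intros continuous_on_risk continuous_on_loss x0)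
  from set_borel_measurable_mult_continuous[OF prior_meas Theta_borel this]
  show ?thesis by (simp add: mpost_kernel_def[abs_def])
qed

lemma tendsto_mpost_kernel_difference_quotient:
  "((\<lambda>e. (mpost_kernel \<Theta> \<pi> \<rho> n xs x0 e t - base_kernel t) / e)
     \<longlongrightarrow> - real n * (loss_gap x0 t * base_kernel t)) (at_right 0)"
proof -
  have "((\<lambda>e. mpost_kernel \<Theta> \<pi> \<rho> n xs x0 e t) has_real_derivative
      - real n * (loss_gap x0 t * base_kernel t)) (at_right 0)"
    by (rule has_field_derivative_at_within[OF has_real_derivative_mpost_kernel])
  then show ?thesis by (simp add: has_field_derivative_iff mpost_kernel_0)
qed

lemma has_real_derivative_mass:
  assumes x0: "x0 \<in> X" and env: "set_integrable lborel \<Theta> (\<lambda>t. (1 + \<bar>t\<bar>) * envelope t)"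
  shows "((\<lambda>e. LINT t:\<Theta>|lborel. mpost_kernel \<Theta> \<pi> \<rho> n xs x0 e t) has_real_derivative
           - real n * (LINT t:\<Theta>|lborel. loss_gap x0 t * base_kernel t)) (at_right 0)"
proof -
  define C where "C = 2 * exp (- real n * L / 2) * real n * (\<bar>loss_gap x0 0\<bar> + 2 * M)"
  have int_gap: "integrable lborel (\<lambda>t. indicator \<Theta> t *\<^sub>R (- real n * (loss_gap x0 t * base_kernel t)))"
    using set_integrable_mult_right[OF set_integrable_loss_gap_mult_base_kernel[OF x0 env], of "- real n"]
    by (simp add: set_integrable_def)
  have "((\<lambda>e. LINT t:\<Theta>|lborel. mpost_kernel \<Theta> \<pi> \<rho> n xs x0 e t) has_real_derivative
           (LINT t:\<Theta>|lborel. - real n * (loss_gap x0 t * base_kernel t))) (at_right 0)"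
    unfolding set_lebesgue_integral_def
  proof (rule has_real_derivative_integral_at_right[where \<delta>="1 / 2"
        and w="\<lambda>t. indicator \<Theta> t *\<^sub>R (C * ((1 + \<bar>t\<bar>) * envelope t))"])
    show "(\<lambda>t. indicator \<Theta> t *\<^sub>R mpost_kernel \<Theta> \<pi> \<rho> n xs x0 e t) \<in> borel_measurable lborel" for e
      using set_borel_measurable_mpost_kernel[OF x0] by (simp add: set_borel_measurable_def)
    show "integrable lborel (\<lambda>t. indicator \<Theta> t *\<^sub>R mpost_kernel \<Theta> \<pi> \<rho> n xs x0 0 t)"
      using set_integrable_base_kernel by (simp add: set_integrable_def mpost_kernel_0)
    show "integrable lborel (\<lambda>t. indicator \<Theta> t *\<^sub>R (C * ((1 + \<bar>t\<bar>) * envelope t)))"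
      using set_integrable_mult_right[OF env, of C] by (simp add: set_integrable_def)
    show "AE t in lborel. ((\<lambda>e. (indicator \<Theta> t *\<^sub>R mpost_kernel \<Theta> \<pi> \<rho> n xs x0 e t
          - indicator \<Theta> t *\<^sub>R mpost_kernel \<Theta> \<pi> \<rho> n xs x0 0 t) / e)
        \<longlongrightarrow> indicator \<Theta> t *\<^sub>R (- real n * (loss_gap x0 t * base_kernel t))) (at_right 0)"
      using tendsto_mpost_kernel_difference_quotient
      by (intro AE_I2) (simp add: indicator_def mpost_kernel_0)
    show "AE t in lborel. \<bar>indicator \<Theta> t *\<^sub>R mpost_kernel \<Theta> \<pi> \<rho> n xs x0 e t
          - indicator \<Theta> t *\<^sub>R mpost_kernel \<Theta> \<pi> \<rho> n xs x0 0 t\<bar>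
        \<le> e * (indicator \<Theta> t *\<^sub>R (C * ((1 + \<bar>t\<bar>) * envelope t)))"
      if "0 < e" "e \<le> 1 / 2" for e
      using mpost_kernel_increment_le[OF x0 that] that
      by (intro AE_I2) (simp add: indicator_def mpost_kernel_0 C_def)
    show "(\<lambda>t. indicator \<Theta> t *\<^sub>R (- real n * (loss_gap x0 t * base_kernel t))) \<in> borel_measurable lborel"
      using int_gap by (rule borel_measurable_integrable)
  qed simp
  then show ?thesis unfolding set_integral_mult_right .
qed

lemma has_real_derivative_mpost:
  assumes x0: "x0 \<in> X" and \<theta>: "\<theta> \<in> \<Theta>"
    and env: "set_integrable lborel \<Theta> (\<lambda>t. (1 + \<bar>t\<bar>) * envelope t)"
  shows "((\<lambda>e. mpost \<Theta> \<pi> \<rho> n xs x0 e \<theta>) has_real_derivative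
      real n * base_kernel \<theta> * (LINT t:\<Theta>|lborel. (loss_gap x0 t - loss_gap x0 \<theta>) * base_kernel t)
        / base_mass\<^sup>2) (at 0 within {0..1})"
proof -
  define I where "I = (LINT t:\<Theta>|lborel. loss_gap x0 t * base_kernel t)"
  have deriv: "((\<lambda>e. mpost \<Theta> \<pi> \<rho> n xs x0 e \<theta>) has_real_derivative
      ((- real n * (loss_gap x0 \<theta> * base_kernel \<theta>)) * base_mass - base_kernel \<theta> * (- real n * I))
        / (base_mass * base_mass)) (at_right 0)"
    using DERIV_divide[OF has_field_derivative_at_within[OF has_real_derivative_mpost_kernel]
        has_real_derivative_mass[OF x0 env]] base_mass_pos
    by (simp add: mpost_def[abs_def] mpost_kernel_0 I_def flip: base_mass_def)
  have J: "(LINT t:\<Theta>|lborel. (loss_gap x0 t - loss_gap x0 \<theta>) * base_kernel t)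
      = I - loss_gap x0 \<theta> * base_mass"
    using set_integrable_loss_gap_mult_base_kernel[OF x0 env] set_integrable_base_kernel
    by (simp add: I_def base_mass_def left_diff_distrib set_integral_diff)
  have D: "((- real n * (loss_gap x0 \<theta> * base_kernel \<theta>)) * base_mass - base_kernel \<theta> * (- real n * I))
        / (base_mass * base_mass)
      = real n * base_kernel \<theta> * (I - loss_gap x0 \<theta> * base_mass) / base_mass\<^sup>2"
    by (simp add: power2_eq_square algebra_simps)
  from deriv show ?thesis
    unfolding at_within_Icc_at_right[OF zero_less_one] J D .
qed

lemma abs_integral_loss_gap_increment_le:
  assumes x0: "x0 \<in> X" and \<theta>: "\<theta> \<in> \<Theta>"
    and env: "set_integrable lborel \<Theta> (\<lambda>t. (1 + \<bar>t\<bar>) * envelope t)"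
  shows "\<bar>LINT t:\<Theta>|lborel. (loss_gap x0 t - loss_gap x0 \<theta>) * base_kernel t\<bar>
    \<le> 2 * M * (LINT t:\<Theta>|lborel. \<bar>t\<bar> * base_kernel t) + 2 * M * \<bar>\<theta>\<bar> * base_mass"
proof -
  define A where "A = (LINT t:\<Theta>|lborel. \<bar>t\<bar> * base_kernel t)"
  define I where "I = (LINT t:\<Theta>|lborel. (loss_gap x0 t - loss_gap x0 \<theta>) * base_kernel t)"
  have intA: "set_integrable lborel \<Theta> (\<lambda>t. \<bar>t\<bar> * base_kernel t)"
    using set_integrable_abs_mult_base_kernel[OF env] .
  have intI: "set_integrable lborel \<Theta> (\<lambda>t. (loss_gap x0 t - loss_gap x0 \<theta>) * base_kernel t)"
    unfolding left_diff_distrib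
    by (intro set_integral_diff set_integrable_mult_right set_integrable_loss_gap_mult_base_kernel
        x0 env set_integrable_base_kernel)
  have "\<bar>I\<bar> \<le> (LINT t:\<Theta>|lborel. \<bar>(loss_gap x0 t - loss_gap x0 \<theta>) * base_kernel t\<bar>)"
    using set_integral_norm_bound[OF intI] by (simp add: I_def)
  also have "\<dots> \<le> (LINT t:\<Theta>|lborel. 2 * M * (\<bar>t\<bar> * base_kernel t) + 2 * M * \<bar>\<theta>\<bar> * base_kernel t)"
  proof (rule set_integral_mono)
    show "set_integrable lborel \<Theta> (\<lambda>t. 2 * M * (\<bar>t\<bar> * base_kernel t) + 2 * M * \<bar>\<theta>\<bar> * base_kernel t)"
      by (intro set_integral_add set_integrable_mult_right intA set_integrable_base_kernel)
    fix t assume t: "t \<in> \<Theta>"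
    have "\<bar>loss_gap x0 t - loss_gap x0 \<theta>\<bar> \<le> 2 * M * (\<bar>t\<bar> + \<bar>\<theta>\<bar>)"
      using loss_gap_lipschitz[OF x0 t \<theta>] score_bound_nonneg abs_triangle_ineq4[of t \<theta>]
      by (smt (verit, best) mult_left_mono)
    then have "\<bar>loss_gap x0 t - loss_gap x0 \<theta>\<bar> * base_kernel t \<le> 2 * M * (\<bar>t\<bar> + \<bar>\<theta>\<bar>) * base_kernel t"
      using base_kernel_nonneg[OF t] by (rule mult_right_mono)
    moreover have "\<bar>(loss_gap x0 t - loss_gap x0 \<theta>) * base_kernel t\<bar>
        = \<bar>loss_gap x0 t - loss_gap x0 \<theta>\<bar> * base_kernel t"
      using base_kernel_nonneg[OF t] by (simp add: abs_mult)
    ultimately show "\<bar>(loss_gap x0 t - loss_gap x0 \<theta>) * base_kernel t\<bar>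
        \<le> 2 * M * (\<bar>t\<bar> * base_kernel t) + 2 * M * \<bar>\<theta>\<bar> * base_kernel t"
      by (simp add: algebra_simps)
  qed (use set_integrable_abs[OF intI] in simp)
  also have "\<dots> = 2 * M * A + 2 * M * \<bar>\<theta>\<bar> * base_mass"
  proof -
    have "set_integrable lborel \<Theta> (\<lambda>t. 2 * M * (\<bar>t\<bar> * base_kernel t))"
      "set_integrable lborel \<Theta> (\<lambda>t. 2 * M * \<bar>\<theta>\<bar> * base_kernel t)"
      by (intro set_integrable_mult_right intA set_integrable_base_kernel)+
    then show ?thesis by (simp add: A_def base_mass_def)
  qed
  finally show ?thesis by (simp add: A_def I_def)
qed

lemma abs_influence_le:
  assumes x0: "x0 \<in> X" and \<theta>: "\<theta> \<in> \<Theta>"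
    and env: "set_integrable lborel \<Theta> (\<lambda>t. (1 + \<bar>t\<bar>) * envelope t)"
    and K: "\<And>t. t \<in> \<Theta> \<Longrightarrow> base_kernel t * \<bar>t\<bar> \<le> K"
  shows "\<bar>real n * base_kernel \<theta> * (LINT t:\<Theta>|lborel. (loss_gap x0 t - loss_gap x0 \<theta>) * base_kernel t)
        / base_mass\<^sup>2\<bar>
    \<le> 2 * M * real n * (P * exp (- real n * L) * (LINT t:\<Theta>|lborel. \<bar>t\<bar> * base_kernel t)
        + K * base_mass) / base_mass\<^sup>2"
proof -
  define A where "A = (LINT t:\<Theta>|lborel. \<bar>t\<bar> * base_kernel t)"
  define I where "I = (LINT t:\<Theta>|lborel. (loss_gap x0 t - loss_gap x0 \<theta>) * base_kernel t)"
  have "(LINT t:\<Theta>|lborel. 0) \<le> A"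
    unfolding A_def
    by (rule set_integral_mono[OF _ set_integrable_abs_mult_base_kernel[OF env]])
      (auto simp: base_kernel_nonneg set_integrable_def)
  then have A_nonneg: "0 \<le> A" by simp
  have I_le: "\<bar>I\<bar> \<le> 2 * M * A + 2 * M * \<bar>\<theta>\<bar> * base_mass"
    unfolding A_def I_def by (rule abs_integral_loss_gap_increment_le[OF x0 \<theta> env])
  have "base_kernel \<theta> * \<bar>I\<bar> \<le> base_kernel \<theta> * (2 * M * A + 2 * M * \<bar>\<theta>\<bar> * base_mass)"
    using I_le base_kernel_nonneg[OF \<theta>] by (rule mult_left_mono)
  also have "\<dots> = 2 * M * (base_kernel \<theta> * A + (base_kernel \<theta> * \<bar>\<theta>\<bar>) * base_mass)"
    by (simp add: algebra_simps)
  also have "\<dots> \<le> 2 * M * (P * exp (- real n * L) * A + K * base_mass)"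
    using base_kernel_le[OF \<theta>] K[OF \<theta>] A_nonneg base_mass_pos score_bound_nonneg
    by (intro mult_left_mono add_mono mult_right_mono) auto
  finally have "real n * (base_kernel \<theta> * \<bar>I\<bar>) / base_mass\<^sup>2
      \<le> real n * (2 * M * (P * exp (- real n * L) * A + K * base_mass)) / base_mass\<^sup>2"
    by (intro divide_right_mono mult_left_mono) auto
  then show ?thesis
    using base_kernel_nonneg[OF \<theta>] by (simp add: A_def I_def abs_mult mult_ac)
qed

lemma unif_B_robust_of_moments:
  assumes env: "set_integrable lborel \<Theta> (\<lambda>t. (1 + \<bar>t\<bar>) * envelope t)"
    and K: "\<And>t. t \<in> \<Theta> \<Longrightarrow> base_kernel t * \<bar>t\<bar> \<le> K"
  shows "unif_B_robust X \<Theta> \<pi> \<rho> n xs"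
  unfolding unif_B_robust_def
  using has_real_derivative_mpost[OF _ _ env] abs_influence_le[OF _ _ env K] by blast

lemma envelope_moment_of_prior_moment:
  assumes "set_integrable lborel \<Theta> (\<lambda>\<theta>. \<bar>\<theta>\<bar> * \<pi> \<theta>)"
  shows "set_integrable lborel \<Theta> (\<lambda>t. (1 + \<bar>t\<bar>) * envelope t)"
proof (rule set_integrable_bound[OF _ set_borel_measurable_envelope_moment])
  have "set_integrable lborel \<Theta> (indicator {-1..1} :: real \<Rightarrow> real)"
    unfolding set_integrable_def using Theta_borel
    by (intro integrable_mult_indicator integrable_real_indicator) auto
  then show "set_integrable lborel \<Theta>
      (\<lambda>t. exp (- real n * L / 2) * (2 * P * indicator {-1..1} t + 2 * (\<bar>t\<bar> * \<pi> t)))"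
    using assms by (intro set_integrable_mult_right set_integral_add) auto
  show "AE t in lborel. t \<in> \<Theta> \<longrightarrow> norm ((1 + \<bar>t\<bar>) * envelope t)
      \<le> norm (exp (- real n * L / 2) * (2 * P * indicator {-1..1} t + 2 * (\<bar>t\<bar> * \<pi> t)))"
  proof (intro AE_I2 impI)
    fix t assume t: "t \<in> \<Theta>"
    have \<pi>t: "0 \<le> \<pi> t" "\<pi> t \<le> P" using prior_nonneg[OF t] prior_le[OF t] by auto
    have "(1 + \<bar>t\<bar>) * \<pi> t \<le> 2 * P * indicator {-1..1} t + 2 * (\<bar>t\<bar> * \<pi> t)"
    proof (cases "\<bar>t\<bar> \<le> 1")
      case True
      then have "(1 + \<bar>t\<bar>) * \<pi> t \<le> 2 * P" using \<pi>t mult_mono[of "1 + \<bar>t\<bar>" 2 "\<pi> t" P] by simp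
      moreover have "0 \<le> \<bar>t\<bar> * \<pi> t" using \<pi>t by simp
      ultimately show ?thesis using True by (simp add: indicator_def abs_le_iff)
    next
      case False
      then have "(1 + \<bar>t\<bar>) * \<pi> t \<le> 2 * (\<bar>t\<bar> * \<pi> t)"
        using \<pi>t mult_right_mono[of "1 + \<bar>t\<bar>" "2 * \<bar>t\<bar>" "\<pi> t"] by simp
      then show ?thesis using prior_bound_nonneg by (simp add: indicator_def)
    qed
    then have "exp (- real n * L / 2) * ((1 + \<bar>t\<bar>) * \<pi> t)
        \<le> exp (- real n * L / 2) * (2 * P * indicator {-1..1} t + 2 * (\<bar>t\<bar> * \<pi> t))"
      by (rule mult_left_mono) simp
    moreover have "(1 + \<bar>t\<bar>) * envelope t \<le> exp (- real n * L / 2) * ((1 + \<bar>t\<bar>) * \<pi> t)"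
      using mult_left_mono[OF envelope_le[OF t], of "1 + \<bar>t\<bar>"] by (simp add: mult_ac)
    ultimately have "(1 + \<bar>t\<bar>) * envelope t
        \<le> exp (- real n * L / 2) * (2 * P * indicator {-1..1} t + 2 * (\<bar>t\<bar> * \<pi> t))"
      by linarith
    then show "norm ((1 + \<bar>t\<bar>) * envelope t)
        \<le> norm (exp (- real n * L / 2) * (2 * P * indicator {-1..1} t + 2 * (\<bar>t\<bar> * \<pi> t)))"
      using envelope_nonneg[OF t] by simp
  qed
qed

lemma base_kernel_moment_le_of_prior_moment:
  assumes C: "\<And>\<theta>. \<theta> \<in> \<Theta> \<Longrightarrow> \<pi> \<theta> * \<bar>\<theta>\<bar> \<le> C" and t: "t \<in> \<Theta>"
  shows "base_kernel t * \<bar>t\<bar> \<le> C * exp (- real n * L)"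
proof -
  have "0 \<le> C" using C[OF t] prior_nonneg[OF t] by (meson abs_ge_zero mult_nonneg_nonneg order_trans)
  have "exp (- real n * risk t) \<le> exp (- real n * L)"
    using mult_left_mono[OF risk_ge[OF t], of "real n"] by simp
  then have "(\<pi> t * \<bar>t\<bar>) * exp (- real n * risk t) \<le> C * exp (- real n * L)"
    using C[OF t] prior_nonneg[OF t] \<open>0 \<le> C\<close> by (intro mult_mono) auto
  then show ?thesis by (simp add: base_kernel_def mult_ac)
qed

lemma risk_ge_linear_of_convex_coercive:
  assumes "convex_on \<Theta> (\<rho> (xs 0))" "\<forall>K. \<exists>R. \<forall>\<theta>\<in>\<Theta>. R \<le> \<bar>\<theta>\<bar> \<longrightarrow> K \<le> \<rho> (xs 0) \<theta>"
  obtains R C where "0 < R" "\<And>t. t \<in> \<Theta> \<Longrightarrow> \<bar>t\<bar> / R - C \<le> real n * risk t"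
proof -
  have "convex \<Theta>" using Theta_interval is_interval_convex_1 by blast
  then obtain R C0 where R: "0 < R" and lin: "\<And>t. t \<in> \<Theta> \<Longrightarrow> \<bar>t\<bar> / R - C0 \<le> \<rho> (xs 0) t"
    using convex_on_coercive_ge_linear zero_in assms loss_ge[OF sample_0] by metis
  obtain m where m: "n = Suc m" using n_pos by (cases n) auto
  have "\<bar>t\<bar> / R - (C0 - real m * L) \<le> real n * risk t" if t: "t \<in> \<Theta>" for t
  proof -
    have "real (card {..<m}) * L \<le> (\<Sum>i<m. \<rho> (xs (Suc i)) t)"
      by (rule sum_bounded_below) (simp add: loss_ge sample t m)
    moreover have "real n * risk t = \<rho> (xs 0) t + (\<Sum>i<m. \<rho> (xs (Suc i)) t)"
      unfolding n_mult_risk unfolding m sum.lessThan_Suc_shift by simp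
    ultimately show ?thesis using lin[OF t] by simp
  qed
  with R show ?thesis by (rule that)
qed

lemma envelope_moment_of_linear_growth:
  assumes R: "0 < R" and lin: "\<And>t. t \<in> \<Theta> \<Longrightarrow> \<bar>t\<bar> / R - C \<le> real n * risk t"
  shows "set_integrable lborel \<Theta> (\<lambda>t. (1 + \<bar>t\<bar>) * envelope t)"
proof (rule set_integrable_bound[OF _ set_borel_measurable_envelope_moment])
  show "set_integrable lborel \<Theta> (\<lambda>t. P * exp (C / 2) * ((1 + \<bar>t\<bar>) * exp (- (1 / (2 * R)) * \<bar>t\<bar>)))"
    unfolding set_integrable_def using integrable_one_plus_abs_mult_exp_neg_abs[of "1 / (2 * R)"] R Theta_borel
    by (intro integrable_mult_indicator integrable_mult_right) auto
  show "AE t in lborel. t \<in> \<Theta> \<longrightarrow> norm ((1 + \<bar>t\<bar>) * envelope t)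
      \<le> norm (P * exp (C / 2) * ((1 + \<bar>t\<bar>) * exp (- (1 / (2 * R)) * \<bar>t\<bar>)))"
  proof (intro AE_I2 impI)
    fix t assume t: "t \<in> \<Theta>"
    have "- (real n / 2) * risk t \<le> C / 2 + - (1 / (2 * R)) * \<bar>t\<bar>"
      using lin[OF t] by (simp add: field_simps)
    then have "exp (- (real n / 2) * risk t) \<le> exp (C / 2) * exp (- (1 / (2 * R)) * \<bar>t\<bar>)"
      by (simp flip: exp_add)
    then have "envelope t \<le> P * (exp (C / 2) * exp (- (1 / (2 * R)) * \<bar>t\<bar>))"
      unfolding envelope_def using prior_le[OF t] prior_nonneg[OF t] by (intro mult_mono) auto
    then have "(1 + \<bar>t\<bar>) * envelope t \<le> (1 + \<bar>t\<bar>) * (P * (exp (C / 2) * exp (- (1 / (2 * R)) * \<bar>t\<bar>)))"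
      by (rule mult_left_mono) simp
    also have "\<dots> = P * exp (C / 2) * ((1 + \<bar>t\<bar>) * exp (- (1 / (2 * R)) * \<bar>t\<bar>))"
      by (simp add: mult_ac)
    finally have "(1 + \<bar>t\<bar>) * envelope t \<le> P * exp (C / 2) * ((1 + \<bar>t\<bar>) * exp (- (1 / (2 * R)) * \<bar>t\<bar>))" .
    then show "norm ((1 + \<bar>t\<bar>) * envelope t)
        \<le> norm (P * exp (C / 2) * ((1 + \<bar>t\<bar>) * exp (- (1 / (2 * R)) * \<bar>t\<bar>)))"
      using envelope_nonneg[OF t] by simp
  qed
qed

lemma base_kernel_moment_le_of_linear_growth:
  assumes R: "0 < R" and lin: "\<And>t. t \<in> \<Theta> \<Longrightarrow> \<bar>t\<bar> / R - C \<le> real n * risk t"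
    and t: "t \<in> \<Theta>"
  shows "base_kernel t * \<bar>t\<bar> \<le> P * (exp C * R)"
proof -
  have "\<bar>t\<bar> / R \<le> exp (\<bar>t\<bar> / R)"
    using exp_ge_add_one_self[of "\<bar>t\<bar> / R"] by linarith
  then have "\<bar>t\<bar> \<le> R * exp (\<bar>t\<bar> / R)"
    using R by (simp add: pos_divide_le_eq mult.commute)
  then have "exp (C - \<bar>t\<bar> / R) * \<bar>t\<bar> \<le> exp (C - \<bar>t\<bar> / R) * (R * exp (\<bar>t\<bar> / R))"
    by (rule mult_left_mono) simp
  also have "\<dots> = exp C * R"
    by (simp add: exp_diff)
  finally have decay: "exp (C - \<bar>t\<bar> / R) * \<bar>t\<bar> \<le> exp C * R" .
  have "exp (- real n * risk t) \<le> exp (C - \<bar>t\<bar> / R)"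
    using lin[OF t] by simp
  then have kernel_decay: "exp (- real n * risk t) * \<bar>t\<bar> \<le> exp C * R"
    using decay by (meson abs_ge_zero mult_right_mono order_trans)
  have "\<pi> t * (exp (- real n * risk t) * \<bar>t\<bar>) \<le> P * (exp C * R)"
    by (rule mult_mono[OF prior_le[OF t] kernel_decay]) (use prior_nonneg[OF t] prior_bound_nonneg in auto)
  then show ?thesis by (simp add: base_kernel_def mult_ac)
qed

end

theorem mainTheorem6:
  fixes X :: "'a::euclidean_space set" and \<Theta> :: "real set"
    and \<rho> :: "'a \<Rightarrow> real \<Rightarrow> real" and \<psi> :: "'a \<Rightarrow> real \<Rightarrow> real"
    and \<pi> :: "real \<Rightarrow> real" and n :: nat and xs :: "nat \<Rightarrow> 'a"
  assumes Theta_interval: "is_interval \<Theta>" and zero_in: "0 \<in> \<Theta>"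
    and score: "\<And>x \<theta>. x \<in> X \<Longrightarrow> \<theta> \<in> \<Theta> \<Longrightarrow> (\<rho> x has_real_derivative \<psi> x \<theta>) (at \<theta> within \<Theta>)"
    and n_pos: "n \<ge> 1" and sample: "\<And>i. i < n \<Longrightarrow> xs i \<in> X"
    and prior_meas: "\<pi> \<in> borel_measurable lborel"
    and prior_nonneg: "\<And>\<theta>. \<theta> \<in> \<Theta> \<Longrightarrow> \<pi> \<theta> \<ge> 0"
    and post_int: "set_integrable lborel \<Theta> (mpost_kernel \<Theta> \<pi> \<rho> n xs (xs 0) 0)"
    and post_pos: "(LINT t:\<Theta>|lborel. mpost_kernel \<Theta> \<pi> \<rho> n xs (xs 0) 0 t) > 0"
    and rho_lb: "\<exists>L. \<forall>x\<in>X. \<forall>\<theta>\<in>\<Theta>. L \<le> \<rho> x \<theta>"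
    and psi_bdd: "\<exists>M. \<forall>x\<in>X. \<forall>\<theta>\<in>\<Theta>. \<bar>\<psi> x \<theta>\<bar> \<le> M"
    and prior_bdd: "\<exists>P. \<forall>\<theta>\<in>\<Theta>. \<pi> \<theta> \<le> P"
    and cases:
      "(set_integrable lborel \<Theta> (\<lambda>\<theta>. \<bar>\<theta>\<bar> * \<pi> \<theta>) \<and> (\<exists>C. \<forall>\<theta>\<in>\<Theta>. \<pi> \<theta> * \<bar>\<theta>\<bar> \<le> C))
       \<or> (\<forall>x\<in>X. convex_on \<Theta> (\<rho> x) \<and>
             (\<forall>K. \<exists>R. \<forall>\<theta>\<in>\<Theta>. R \<le> \<bar>\<theta>\<bar> \<longrightarrow> K \<le> \<rho> x \<theta>))"
  shows "unif_B_robust X \<Theta> \<pi> \<rho> n xs"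
proof -
  obtain L M P where L: "\<forall>x\<in>X. \<forall>\<theta>\<in>\<Theta>. L \<le> \<rho> x \<theta>"
    and M: "\<forall>x\<in>X. \<forall>\<theta>\<in>\<Theta>. \<bar>\<psi> x \<theta>\<bar> \<le> M" and P: "\<forall>\<theta>\<in>\<Theta>. \<pi> \<theta> \<le> P"
    using rho_lb psi_bdd prior_bdd by blast
  interpret bounded_score_mposterior X \<Theta> \<rho> \<psi> \<pi> n xs L M P
    by (rule bounded_score_mposterior.intro)
      (use Theta_interval zero_in score n_pos sample prior_meas prior_nonneg post_int post_pos L M P in auto)
  have "\<exists>K. set_integrable lborel \<Theta> (\<lambda>t. (1 + \<bar>t\<bar>) * envelope t) \<and> (\<forall>t\<in>\<Theta>. base_kernel t * \<bar>t\<bar> \<le> K)"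
    using cases
  proof
    assume "set_integrable lborel \<Theta> (\<lambda>\<theta>. \<bar>\<theta>\<bar> * \<pi> \<theta>) \<and> (\<exists>C. \<forall>\<theta>\<in>\<Theta>. \<pi> \<theta> * \<bar>\<theta>\<bar> \<le> C)"
    then show ?thesis
      using envelope_moment_of_prior_moment base_kernel_moment_le_of_prior_moment by blast
  next
    assume "\<forall>x\<in>X. convex_on \<Theta> (\<rho> x) \<and> (\<forall>K. \<exists>R. \<forall>\<theta>\<in>\<Theta>. R \<le> \<bar>\<theta>\<bar> \<longrightarrow> K \<le> \<rho> x \<theta>)"
    then obtain R C where "0 < R" "\<And>t. t \<in> \<Theta> \<Longrightarrow> \<bar>t\<bar> / R - C \<le> real n * risk t"
      using risk_ge_linear_of_convex_coercive sample_0 by blast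
    then show ?thesis
      using envelope_moment_of_linear_growth base_kernel_moment_le_of_linear_growth by blast
  qed
  then show ?thesis using unif_B_robust_of_moments by blast
qed

end
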